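(* Let $\alpha\in\mathbb{N}_0+\frac12$, $\mathbf m=(m_1,\dots,m_n)\in\mathbb{N}_0^n$, and $(t_{m_1},\dots,t_{m_n})\in\mathbb{R}^n$. Then the operator $T^{(\alpha)}_{\mathbf m}:=T^{(\alpha)}_{\tau^{(\alpha)}_{\mathbf m}}$ is an exceptional Gegenbauer operator, and $$T^{(\alpha)}_{\mathbf m}C^{(\alpha)}_{\mathbf m;i}=\lambda_iC^{(\alpha)}_{\mathbf m;i},\qquad\lambda_i=-i(2\alpha+i),\quad i\in\mathbb{N}_0.$$
   Context: For a nonzero polynomial $\tau$ and $\alpha\in\mathbb{R}$, $T^{(\alpha)}_\tau=(1-z^2)\left(D_z^2-2\frac{\tau_z}{\tau}D_z+\frac{\tau_{zz}}{\tau}\right)-(2\alpha+1)zD_z+(2\alpha-1)z\frac{\tau_z}{\tau}$; it is an exceptional Gegenbauer operator if it has polynomial eigenfunctions $\{\pi_i\}_{i\in\mathbb{N}_0}$ of pairwise distinct degrees with only finitely many nonnegative integers missing from $\{\deg\pi_i\}$. $C^{(\alpha)}_i(z)=\sum_{k=0}^{\lfloor i/2\rfloor}(-1)^k\frac{\Gamma(i-k+\alpha)}{\Gamma(\alpha)k!(i-2k)!}(2z)^{i-2k}$ are the classical Gegenbauer polynomials; $W^{(\alpha)}(z)=(1-z^2)^{\alpha-1/2}$. For $i,j\in\mathbb{N}_0$, $\rho^{(\alpha)}_{ij}(z)=\int_{-1}^zC^{(\alpha)}_i(u)C^{(\alpha)}_j(u)W^{(\alpha)}(u)\,du$. For $\mathbf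 m=(m_1,\dots,m_n)\in\mathbb{N}_0^n$ with real parameters $(t_{m_1},\dots,t_{m_n})$, $\mathcal R^{(\alpha)}_{\mathbf m}$ is the $n\times n$ matrix with entries $[\mathcal R^{(\alpha)}_{\mathbf m}]_{k\ell}=\delta_{k\ell}+t_{m_\ell}\rho^{(\alpha)}_{m_km_\ell}(z)$; $\tau^{(\alpha)}_{\mathbf m}=\det\mathcal R^{(\alpha)}_{\mathbf m}$; $\mathbf Q^{(\alpha)}_{\mathbf m}=\tau^{(\alpha)}_{\mathbf m}(\mathcal R^{(\alpha)}_{\mathbf m})^{-1}(C^{(\alpha)}_{m_1},\dots,C^{(\alpha)}_{m_n})^T$. For $i\in\mathbb{N}_0$, the exceptional Gegenbauer polynomial of the second kind $C^{(\alpha)}_{\mathbf m;i}$ is the $(n+1)$-st entry of $\mathbf Q^{(\alpha)}_{(m_1,\dots,m_n,i)}$ computed with parameters $(t_{m_1},\dots,t_{m_n},s)$, $s\in\mathbb{R}$ arbitrary (the entry does not depend on $s$). *)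

theory Defs
  imports "HOL-Analysis.Gamma_Function" "HOL-Computational_Algebra.Polynomial"
    "Jordan_Normal_Form.Determinant"
begin

text \<open>The operator T^(alpha)_tau applied to a polynomial p, evaluated at a point z
  (meaningful where tau(z) is nonzero).\<close>
definition gop :: "real \<Rightarrow> real poly \<Rightarrow> real poly \<Rightarrow> real \<Rightarrow> real" where
  "gop \<alpha> \<tau> p z =
     (1 - z^2) * (poly (pderiv (pderiv p)) z
                   - 2 * (poly (pderiv \<tau>) z / poly \<tau> z) * poly (pderiv p) z
                   + (poly (pderiv (pderiv \<tau>)) z / poly \<tau> z) * poly p z)
     - (2*\<alpha> + 1) * z * poly (pderiv p) z
     + (2*\<alpha> - 1) * z * (poly (pderiv \<tau>) z / poly \<tau> z) * poly p z"

definition is_eigenfunction :: "real \<Rightarrow> real poly \<Rightarrow> real poly \<Rightarrow> real \<Rightarrow> bool" where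
  "is_eigenfunction \<alpha> \<tau> p lam \<longleftrightarrow> (\<forall>z. poly \<tau> z \<noteq> 0 \<longrightarrow> gop \<alpha> \<tau> p z = lam * poly p z)"

definition exceptional_gegenbauer_operator :: "real \<Rightarrow> real poly \<Rightarrow> bool" where
  "exceptional_gegenbauer_operator \<alpha> \<tau> \<longleftrightarrow> \<tau> \<noteq> 0 \<and>
     (\<exists>\<pi> :: nat \<Rightarrow> real poly. (\<forall>i. \<pi> i \<noteq> 0 \<and> (\<exists>lam. is_eigenfunction \<alpha> \<tau> (\<pi> i) lam))
        \<and> inj (\<lambda>i. degree (\<pi> i))
        \<and> finite (UNIV - range (\<lambda>i. degree (\<pi> i))))"

definition gegenbauer :: "real \<Rightarrow> nat \<Rightarrow> real poly" where
  "gegenbauer \<alpha> i = (\<Sum>k\<le>i div 2.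
      monom ((-1)^k * Gamma (real (i - k) + \<alpha>) / (Gamma \<alpha> * fact k * fact (i - 2*k))
             * 2 ^ (i - 2*k)) (i - 2*k))"

definition poly_antideriv :: "real poly \<Rightarrow> real poly" where
  "poly_antideriv p = (\<Sum>j\<le>degree p. monom (coeff p j / real (Suc j)) (Suc j))"

text \<open>For alpha = k + 1/2 the weight (1-z^2)^(alpha-1/2) is the polynomial (1-z^2)^k,
  and rho_ij(z) = integral from -1 to z of C_i C_j W, a polynomial.\<close>
definition weight :: "nat \<Rightarrow> real poly" where
  "weight k = [:1, 0, -1:] ^ k"

definition rho :: "nat \<Rightarrow> nat \<Rightarrow> nat \<Rightarrow> real poly" where
  "rho k i j = (let \<alpha> = real k + 1/2;
                    P = poly_antideriv (gegenbauer \<alpha> i * gegenbauer \<alpha> j * weight k)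
                in P - [:poly P (-1):])"

text \<open>The matrix R_m, with ms = (m_1..m_n) and ps = parameters (t_{m_1}..t_{m_n}), 0-indexed.\<close>
definition Rmat :: "nat \<Rightarrow> nat list \<Rightarrow> real list \<Rightarrow> real poly mat" where
  "Rmat k ms ps = mat (length ms) (length ms)
     (\<lambda>(a, b). (if a = b then 1 else 0) + smult (ps ! b) (rho k (ms ! a) (ms ! b)))"

definition tau :: "nat \<Rightarrow> nat list \<Rightarrow> real list \<Rightarrow> real poly" where
  "tau k ms ps = det (Rmat k ms ps)"

text \<open>Q_m = tau R^{-1} (C_{m_1},...,C_{m_n})^T = adj(R) (C_{m_1},...)^T.\<close>
definition Qvec :: "nat \<Rightarrow> nat list \<Rightarrow> real list \<Rightarrow> real poly vec" where
  "Qvec k ms ps = adj_mat (Rmat k ms ps) *\<^sub>v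
     vec (length ms) (\<lambda>a. gegenbauer (real k + 1/2) (ms ! a))"

text \<open>Exceptional Gegenbauer polynomial of the second kind C_{m;i}, computed with the
  extra parameter s for the appended index i.\<close>
definition xgegenbauer :: "nat \<Rightarrow> nat list \<Rightarrow> real list \<Rightarrow> real \<Rightarrow> nat \<Rightarrow> real poly" where
  "xgegenbauer k ms ps s i = Qvec k (ms @ [i]) (ps @ [s]) $ length ms"

end

theory Submission
  imports Defs
begin

text \<open>The entries of \<open>R\<^sub>m\<close> are integrals \<open>\<rho>\<^sub>i\<^sub>j\<close> of products of Gegenbauer polynomials against
  the weight, so \<open>R' = W \<Phi> \<Phi>\<^sup>T diag t\<close>, and the Sturm--Liouville form of the Gegenbauer equation turns
  \<open>(\<lambda>\<^sub>a - \<lambda>\<^sub>b) \<rho>\<^sub>a\<^sub>b\<close> into a Wronskian. Together with \<open>R adj R = adj R R = \<tau>\<close> and Jacobi's formula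
  \<open>\<tau>' = tr (adj R R')\<close> a direct computation shows that every entry \<open>Q\<^sub>e\<close> of \<open>adj R \<Phi>\<close> satisfies
  \<open>\<tau> T\<^sub>\<tau> Q\<^sub>e = \<lambda>\<^sub>e \<tau> Q\<^sub>e\<close>; the polynomial \<open>C\<^sub>m\<^sub>;\<^sub>i\<close> is the last such entry for the index list
  extended by \<open>i\<close>. At \<open>z = -1\<close> the matrix \<open>R\<close> is the identity, so \<open>\<tau>(-1) = 1\<close> and
  \<open>C\<^sub>m\<^sub>;\<^sub>i(-1) = C\<^sub>i(-1) \<noteq> 0\<close>. Comparing leading coefficients in the eigenvalue equation gives
  \<open>deg C\<^sub>m\<^sub>;\<^sub>i = i + deg \<tau>\<close> as soon as \<open>i > deg \<tau>\<close>, so only finitely many degrees are missing.\<close>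

section \<open>Gegenbauer polynomials\<close>

abbreviation gegenbauer_eigenvalue :: "real \<Rightarrow> nat \<Rightarrow> real" where
  "gegenbauer_eigenvalue \<alpha> i \<equiv> - real i * (2*\<alpha> + real i)"

definition gegenbauer_op :: "real \<Rightarrow> real poly \<Rightarrow> real poly" where
  "gegenbauer_op \<beta> y = [:1, 0, -1:] * pderiv (pderiv y) - smult (2*\<beta> + 1) ([:0, 1:] * pderiv y)"

lemma coeff_x_mult: "coeff ([:0, 1:] * (p :: real poly)) n = (if n = 0 then 0 else coeff p (n - 1))"
  by (cases n) (auto simp: coeff_pCons)

lemma coeff_x_mult_pderiv: "coeff ([:0, 1:] * pderiv (p :: real poly)) n = real n * coeff p n"
  by (cases n) (auto simp: coeff_x_mult coeff_pderiv)

lemma coeff_x2_mult_pderiv2: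
  "coeff ([:0, 1:] * ([:0, 1:] * pderiv (pderiv p))) n = real n * (real n - 1) * coeff (p :: real poly) n"
proof (cases n)
  case (Suc m)
  then show ?thesis
    by (cases m) (auto simp: coeff_x_mult coeff_pderiv algebra_simps)
qed (simp add: coeff_x_mult)

lemma coeff_gegenbauer_op:
  "coeff (gegenbauer_op \<beta> y) m = real (Suc m) * real (Suc (Suc m)) * coeff y (Suc (Suc m))
     - (real m * (real m - 1) + (2*\<beta> + 1) * real m) * coeff y m"
proof -
  have "gegenbauer_op \<beta> y = pderiv (pderiv y) - [:0, 1:] * ([:0, 1:] * pderiv (pderiv y))
      - smult (2*\<beta> + 1) ([:0, 1:] * pderiv y)"
    unfolding gegenbauer_op_def by (simp add: algebra_simps)
  then show ?thesis
    by (simp only: coeff_diff coeff_smult coeff_x2_mult_pderiv2 coeff_x_mult_pderiv coeff_pderiv)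
       (simp add: algebra_simps)
qed

lemma pderiv_gegenbauer_op:
  "pderiv (gegenbauer_op \<beta> y) = gegenbauer_op (\<beta> + 1) (pderiv y) - smult (2*\<beta> + 1) (pderiv y)"
  unfolding gegenbauer_op_def
  by (simp add: pderiv_mult pderiv_diff pderiv_add pderiv_minus pderiv_smult pderiv_pCons algebra_simps)
     (simp add: numeral_mult_conv_smult flip: smult_add_left)

text \<open>If \<open>y(-1) = 0\<close>, evaluating the equation at \<open>-1\<close> forces
  \<open>y'(-1) = 0\<close>, and \<open>y'\<close> solves the equation with parameter \<open>\<beta> + 1\<close>; descend on the degree.\<close>
lemma gegenbauer_eigenpoly_nonzero_at_minus_one:
  assumes "y \<noteq> 0" and "\<beta> \<ge> 0" and "gegenbauer_op \<beta> y = smult \<mu> y"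
  shows "poly y (-1) \<noteq> 0"
  using assms
proof (induction "degree y" arbitrary: y \<beta> \<mu> rule: less_induct)
  case less
  show ?case
  proof
    assume root: "poly y (-1) = 0"
    have "degree y \<noteq> 0"
    proof
      assume "degree y = 0"
      then obtain c where "y = [:c:]" by (rule degree_eq_zeroE)
      then show False using root less.prems(1) by simp
    qed
    then have "pderiv y \<noteq> 0" and "degree (pderiv y) < degree y"
      by (simp_all add: pderiv_eq_0_iff degree_pderiv)
    moreover have "gegenbauer_op (\<beta> + 1) (pderiv y) = smult (\<mu> + 2*\<beta> + 1) (pderiv y)"
      using arg_cong[OF less.prems(3), of pderiv]
      by (simp add: pderiv_gegenbauer_op pderiv_smult algebra_simps flip: smult_add_left)
    ultimately have "poly (pderiv y) (-1) \<noteq> 0"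
      using less.hyps less.prems(2) by (metis add_nonneg_nonneg zero_le_one)
    moreover have "(2*\<beta> + 1) * poly (pderiv y) (-1) = 0"
      using arg_cong[OF less.prems(3), of "\<lambda>q. poly q (-1)"] root
      by (simp add: gegenbauer_op_def)
    ultimately show False
      using less.prems(2) by simp
  qed
qed

definition gegenbauer_coeff :: "real \<Rightarrow> nat \<Rightarrow> nat \<Rightarrow> real" where
  "gegenbauer_coeff \<alpha> i j = (-1)^j * Gamma (real (i - j) + \<alpha>)
     / (Gamma \<alpha> * fact j * fact (i - 2*j)) * 2 ^ (i - 2*j)"

lemma coeff_gegenbauer:
  "coeff (gegenbauer \<alpha> i) m = (if m \<le> i \<and> even (i - m) then gegenbauer_coeff \<alpha> i ((i - m) div 2) else 0)"
proof -
  have "coeff (gegenbauer \<alpha> i) m = (\<Sum>j\<le>i div 2. if j = (i - m) div 2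
      then (if m \<le> i \<and> even (i - m) then gegenbauer_coeff \<alpha> i j else 0) else 0)"
    unfolding gegenbauer_def coeff_sum coeff_monom gegenbauer_coeff_def
    by (intro sum.cong refl) auto
  moreover have "(i - m) div 2 \<le> i div 2"
    by (simp add: div_le_mono)
  ultimately show ?thesis
    by simp
qed

lemma gegenbauer_coeff_Suc:
  assumes "\<alpha> > 0" and "2 * Suc j \<le> i"
  shows "gegenbauer_coeff \<alpha> i j * real (i - 2*j) * (real (i - 2*j) - 1)
       = - 4 * (real j + 1) * (real (i - j) - 1 + \<alpha>) * gegenbauer_coeff \<alpha> i (Suc j)"
proof -
  obtain r where i: "i = r + 2 * Suc j"
    using assms(2) by (metis le_add_diff_inverse2)
  define G where "G = Gamma (real (r + Suc j) + \<alpha>)"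
  define c where "c = (-1)^j * G * 2^r / (Gamma \<alpha> * fact j * fact r)"
  have "real (r + Suc j) + \<alpha> \<notin> \<int>\<^sub>\<le>\<^sub>0"
    using assms(1) by (auto dest!: nonpos_Ints_nonpos)
  then have Gamma_step: "Gamma (real (i - j) + \<alpha>) = (real r + real j + 1 + \<alpha>) * G"
    using Gamma_plus1[of "real (r + Suc j) + \<alpha>"] by (simp add: G_def i add_ac)
  have nonzero: "Gamma \<alpha> \<noteq> 0" "real r + 1 \<noteq> 0" "real r + 2 \<noteq> 0" "real j + 1 \<noteq> 0"
    using assms(1) by (auto simp: Gamma_eq_zero_iff dest!: nonpos_Ints_nonpos)
  have idx: "i - 2*j = Suc (Suc r)" "i - 2 * Suc j = r" "i - Suc j = r + Suc j"
    using i by simp_all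
  have "gegenbauer_coeff \<alpha> i j
      = (-1)^j * ((real r + real j + 1 + \<alpha>) * G) / (Gamma \<alpha> * fact j * ((real r + 2) * (real r + 1) * fact r)) * (4 * 2^r)"
    unfolding gegenbauer_coeff_def Gamma_step idx by (simp add: algebra_simps)
  then have "gegenbauer_coeff \<alpha> i j = 4 * (real r + real j + 1 + \<alpha>) * c / ((real r + 2) * (real r + 1))"
    unfolding c_def by (simp add: field_simps)
  then have lhs: "gegenbauer_coeff \<alpha> i j * ((real r + 2) * (real r + 1)) = 4 * (real r + real j + 1 + \<alpha>) * c"
    using nonzero by simp
  have rhs: "gegenbauer_coeff \<alpha> i (Suc j) = - c / (real j + 1)"
    unfolding gegenbauer_coeff_def idx c_def G_def using nonzero
    by (simp add: field_simps)
  have "real (i - 2*j) = real r + 2"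
    using i by simp
  then have "gegenbauer_coeff \<alpha> i j * real (i - 2*j) * (real (i - 2*j) - 1)
      = gegenbauer_coeff \<alpha> i j * ((real r + 2) * (real r + 1))"
    by (simp add: algebra_simps)
  also have "\<dots> = 4 * (real r + real j + 1 + \<alpha>) * c"
    by (rule lhs)
  also have "\<dots> = - 4 * (real j + 1) * (real (i - j) - 1 + \<alpha>) * gegenbauer_coeff \<alpha> i (Suc j)"
    unfolding rhs using i nonzero by (simp add: field_simps)
  finally show ?thesis .
qed

lemma coeff_gegenbauer_recurrence:
  assumes "\<alpha> > 0"
  shows "real (Suc m) * real (Suc (Suc m)) * coeff (gegenbauer \<alpha> i) (Suc (Suc m))
    = (real m * (real m + 2*\<alpha>) - real i * (real i + 2*\<alpha>)) * coeff (gegenbauer \<alpha> i) m"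
proof (cases "m \<le> i \<and> even (i - m)")
  case True
  define j where "j = (i - m) div 2"
  have m: "m = i - 2*j" "2*j \<le> i"
    using True unfolding j_def by auto
  have am: "coeff (gegenbauer \<alpha> i) m = gegenbauer_coeff \<alpha> i j"
    unfolding coeff_gegenbauer j_def by (simp only: True simp_thms if_True)
  show ?thesis
  proof (cases j)
    case 0
    then have "coeff (gegenbauer \<alpha> i) (Suc (Suc m)) = 0"
      using m unfolding coeff_gegenbauer by simp
    then show ?thesis
      unfolding am using m 0 by simp
  next
    case (Suc j')
    have a2: "coeff (gegenbauer \<alpha> i) (Suc (Suc m)) = gegenbauer_coeff \<alpha> i j'"
      using m Suc True unfolding coeff_gegenbauer
      by (auto simp: dvd_diff_nat intro: arg_cong[where f = "gegenbauer_coeff \<alpha> i"])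
    have "gegenbauer_coeff \<alpha> i j' * real (i - 2*j') * (real (i - 2*j') - 1)
        = - 4 * (real j' + 1) * (real (i - j') - 1 + \<alpha>) * gegenbauer_coeff \<alpha> i j"
      using gegenbauer_coeff_Suc[OF assms, of j' i] m Suc by simp
    moreover have "real (i - 2*j') = real m + 2" "real (i - j') = real i - real j'"
      using m Suc by auto
    moreover have m_real: "real m = real i - 2 * real j' - 2"
      using m Suc by auto
    ultimately show ?thesis
      unfolding am a2 by (simp add: m_real algebra_simps)
  qed
next
  case False
  then show ?thesis
    unfolding coeff_gegenbauer by auto
qed

lemma gegenbauer_op_gegenbauer:
  assumes "\<alpha> > 0"
  shows "gegenbauer_op \<alpha> (gegenbauer \<alpha> i) = smult (gegenbauer_eigenvalue \<alpha> i) (gegenbauer \<alpha> i)"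
proof (rule poly_eqI)
  fix m
  show "coeff (gegenbauer_op \<alpha> (gegenbauer \<alpha> i)) m = coeff (smult (gegenbauer_eigenvalue \<alpha> i) (gegenbauer \<alpha> i)) m"
    unfolding coeff_gegenbauer_op coeff_gegenbauer_recurrence[OF assms] coeff_smult by (simp add: algebra_simps)
qed

lemma gegenbauer_nonzero:
  assumes "\<alpha> > 0"
  shows "gegenbauer \<alpha> i \<noteq> 0"
proof -
  have "coeff (gegenbauer \<alpha> i) i = gegenbauer_coeff \<alpha> i 0"
    unfolding coeff_gegenbauer by simp
  also have "\<dots> \<noteq> 0"
    unfolding gegenbauer_coeff_def using assms
    by (auto simp: Gamma_eq_zero_iff dest!: nonpos_Ints_nonpos)
  finally show ?thesis
    by auto
qed

lemma poly_gegenbauer_minus_one_nonzero: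
  assumes "\<alpha> > 0"
  shows "poly (gegenbauer \<alpha> i) (-1) \<noteq> 0"
  using gegenbauer_eigenpoly_nonzero_at_minus_one[OF gegenbauer_nonzero[OF assms] _
      gegenbauer_op_gegenbauer[OF assms]] assms
  by simp

section \<open>Adjugates and Jacobi's formula\<close>

lemma sum_mult_delta_right: "b < (n::nat) \<Longrightarrow> (\<Sum>c<n. f c * (if c = b then x else 0)) = f b * (x :: 'a::comm_ring_1)"
  by (simp add: if_distrib cong: if_cong)

lemma sum_mult_delta_left: "b < (n::nat) \<Longrightarrow> (\<Sum>c<n. (if b = c then x else 0) * f c) = x * (f b :: 'a::comm_ring_1)"
  using sum_mult_delta_right[of b n f x] by (simp add: mult.commute eq_commute)

lemma adj_mat_entries:
  assumes R: "R \<in> carrier_mat n n" and a: "a < n" and b: "b < n"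
  shows "(\<Sum>c<n. R $$ (a, c) * adj_mat R $$ (c, b)) = (if a = b then det R else 0)"
    and "(\<Sum>c<n. adj_mat R $$ (a, c) * R $$ (c, b)) = (if a = b then det R else 0)"
proof -
  have A: "adj_mat R \<in> carrier_mat n n"
    using adj_mat(1)[OF R] .
  have "(R * adj_mat R) $$ (a, b) = (det R \<cdot>\<^sub>m 1\<^sub>m n) $$ (a, b)"
    using adj_mat(2)[OF R] by simp
  then show "(\<Sum>c<n. R $$ (a, c) * adj_mat R $$ (c, b)) = (if a = b then det R else 0)"
    using R A a b by (simp add: scalar_prod_def atLeast0LessThan)
  have "(adj_mat R * R) $$ (a, b) = (det R \<cdot>\<^sub>m 1\<^sub>m n) $$ (a, b)"
    using adj_mat(3)[OF R] by simp
  then show "(\<Sum>c<n. adj_mat R $$ (a, c) * R $$ (c, b)) = (if a = b then det R else 0)"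
    using R A a b by (simp add: scalar_prod_def atLeast0LessThan)
qed

lemma poly_det: "poly (det M) (x :: 'a::comm_ring_1) = det (map_mat (\<lambda>q. poly q x) M)"
proof -
  interpret comm_ring_hom "\<lambda>q :: 'a poly. poly q x"
    by unfold_locales simp_all
  show ?thesis
    by simp
qed

lemma poly_adj_mat:
  assumes "M \<in> carrier_mat n n" and "a < n" and "b < n"
  shows "poly (adj_mat M $$ (a, b)) x = adj_mat (map_mat (\<lambda>q. poly q x) M) $$ (a, b)"
proof -
  have "map_mat (\<lambda>q. poly q x) (mat_delete M b a) = mat_delete (map_mat (\<lambda>q. poly q x) M) b a"
    using assms unfolding mat_delete_def by (intro eq_matI) auto
  then show ?thesis
    using assms unfolding adj_mat_def cofactor_def by (simp add: poly_det)
qed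

lemma adj_mat_one: "adj_mat (1\<^sub>m n :: 'a::comm_ring_1 mat) = 1\<^sub>m n"
proof -
  have "1\<^sub>m n * adj_mat (1\<^sub>m n :: 'a mat) = det (1\<^sub>m n :: 'a mat) \<cdot>\<^sub>m 1\<^sub>m n"
    by (rule adj_mat(2)) simp
  moreover have "adj_mat (1\<^sub>m n :: 'a mat) \<in> carrier_mat n n"
    by (rule adj_mat(1)) simp
  moreover have "1 \<cdot>\<^sub>m 1\<^sub>m n = (1\<^sub>m n :: 'a mat)"
    by (intro eq_matI) auto
  ultimately show ?thesis
    by simp
qed

lemma pderiv_sum: "pderiv (\<Sum>x\<in>X. f x) = (\<Sum>x\<in>X. pderiv (f x))"
  by (induction X rule: infinite_finite_induct) (auto simp: pderiv_add)

definition pderiv_row :: "'a::idom poly mat \<Rightarrow> nat \<Rightarrow> 'a poly mat" where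
  "pderiv_row R j = mat (dim_row R) (dim_col R) (\<lambda>(i, l). if i = j then pderiv (R $$ (i, l)) else R $$ (i, l))"

lemma pderiv_row_carrier: "R \<in> carrier_mat n n \<Longrightarrow> pderiv_row R j \<in> carrier_mat n n"
  unfolding pderiv_row_def by simp

lemma det_pderiv_row_Leibniz:
  assumes R: "R \<in> carrier_mat n n" and j: "j < n"
  shows "det (pderiv_row R j) = (\<Sum>p | p permutes {0..<n}.
    signof p * ((\<Prod>i\<in>{0..<n} - {j}. R $$ (i, p i)) * pderiv (R $$ (j, p j))))"
  unfolding det_def'[OF pderiv_row_carrier[OF R]]
proof (intro sum.cong refl)
  fix p assume "p \<in> {p. p permutes {0..<n}}"
  then have p: "\<And>i. i < n \<Longrightarrow> p i < n"
    using permutes_in_image by fastforce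
  have "(\<Prod>i = 0..<n. pderiv_row R j $$ (i, p i))
      = (\<Prod>i = 0..<n. if i = j then pderiv (R $$ (i, p i)) else R $$ (i, p i))"
    using R p by (intro prod.cong refl) (auto simp: pderiv_row_def)
  also have "\<dots> = (\<Prod>i\<in>{0..<n} - {j}. R $$ (i, p i)) * pderiv (R $$ (j, p j))"
    using j by (subst prod.remove[of _ j]) (auto simp: mult.commute intro!: prod.cong)
  finally show "signof p * (\<Prod>i = 0..<n. pderiv_row R j $$ (i, p i))
      = signof p * ((\<Prod>i\<in>{0..<n} - {j}. R $$ (i, p i)) * pderiv (R $$ (j, p j)))"
    by simp
qed

lemma det_pderiv_row_cofactor:
  assumes R: "R \<in> carrier_mat n n" and j: "j < n"
  shows "det (pderiv_row R j) = (\<Sum>l<n. pderiv (R $$ (j, l)) * cofactor R j l)"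
  unfolding laplace_expansion_row[OF pderiv_row_carrier[OF R] j]
proof (intro sum.cong refl)
  fix l assume l: "l \<in> {..<n}"
  have "mat_delete (pderiv_row R j) j l = mat_delete R j l"
    using R j l unfolding mat_delete_def pderiv_row_def by (intro eq_matI) auto
  then show "pderiv_row R j $$ (j, l) * cofactor (pderiv_row R j) j l = pderiv (R $$ (j, l)) * cofactor R j l"
    unfolding cofactor_def using R j l by (simp add: pderiv_row_def)
qed

lemma pderiv_det:
  assumes R: "(R :: 'a::idom poly mat) \<in> carrier_mat n n"
  shows "pderiv (det R) = (\<Sum>a<n. \<Sum>b<n. adj_mat R $$ (b, a) * pderiv (R $$ (a, b)))"
proof -
  have "pderiv (det R) = (\<Sum>p | p permutes {0..<n}. \<Sum>j\<in>{0..<n}.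
      signof p * ((\<Prod>i\<in>{0..<n} - {j}. R $$ (i, p i)) * pderiv (R $$ (j, p j))))"
  proof -
    have "pderiv (of_int c :: 'a poly) = 0" for c
      by (simp add: of_int_poly)
    then show ?thesis
      unfolding det_def'[OF R] by (simp add: pderiv_sum pderiv_mult pderiv_prod sum_distrib_left)
  qed
  also have "\<dots> = (\<Sum>j<n. det (pderiv_row R j))"
    by (subst sum.swap) (simp add: det_pderiv_row_Leibniz[OF R] atLeast0LessThan)
  also have "\<dots> = (\<Sum>a<n. \<Sum>b<n. adj_mat R $$ (b, a) * pderiv (R $$ (a, b)))"
    using R by (intro sum.cong refl) (auto simp: det_pderiv_row_cofactor adj_mat_def mult.commute)
  finally show ?thesis .
qed

section \<open>The operator \<open>\<tau> T\<^sub>\<tau>\<close> and the degrees of its eigenpolynomials\<close>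

definition gop_numerator :: "real \<Rightarrow> real poly \<Rightarrow> real poly \<Rightarrow> real poly" where
  "gop_numerator \<alpha> \<tau> y = [:1, 0, -1:] * (\<tau> * pderiv (pderiv y) - 2 * pderiv \<tau> * pderiv y + pderiv (pderiv \<tau>) * y)
     - smult (2*\<alpha> + 1) ([:0, 1:] * \<tau> * pderiv y) + smult (2*\<alpha> - 1) ([:0, 1:] * pderiv \<tau> * y)"

lemma gop_eq_gop_numerator: "poly \<tau> z \<noteq> 0 \<Longrightarrow> gop \<alpha> \<tau> y z = poly (gop_numerator \<alpha> \<tau> y) z / poly \<tau> z"
  unfolding gop_def gop_numerator_def by (simp add: field_simps power2_eq_square)

lemma is_eigenfunctionI: "gop_numerator \<alpha> \<tau> y = [:lam:] * \<tau> * y \<Longrightarrow> is_eigenfunction \<alpha> \<tau> y lam"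
  unfolding is_eigenfunction_def by (auto simp: gop_eq_gop_numerator)

lemma coeff_mult_degree_le:
  assumes "degree f \<le> a" and "degree g \<le> b"
  shows "coeff (f * g) (a + b) = coeff f a * coeff g b"
proof -
  have "coeff (f * g) (a + b) = (\<Sum>i\<le>a + b. if i = a then coeff f a * coeff g b else 0)"
    unfolding coeff_mult
  proof (intro sum.cong refl)
    fix i assume "i \<in> {..a + b}"
    consider "i < a" | "i = a" | "i > a"
      by linarith
    then show "coeff f i * coeff g (a + b - i) = (if i = a then coeff f a * coeff g b else 0)"
      by cases (use assms in \<open>auto simp: coeff_eq_0\<close>)
  qed
  then show ?thesis
    by simp
qed

lemma degree_x_mult_pderiv_le: "degree ([:0, 1:] * pderiv p) \<le> degree (p :: real poly)"
proof (cases "degree p = 0")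
  case False
  have "degree ([:0, 1:] * pderiv p) \<le> degree [:0, 1 :: real:] + degree (pderiv p)"
    by (rule degree_mult_le)
  with False show ?thesis
    by (simp add: degree_pderiv)
qed (simp add: pderiv_eq_0_iff[THEN iffD2])

lemma degree_x2_mult_pderiv2_le: "degree ([:0, 1:] * ([:0, 1:] * pderiv (pderiv p))) \<le> degree (p :: real poly)"
proof (cases "degree p = 0")
  case False
  have "degree ([:0, 1:] * ([:0, 1:] * pderiv (pderiv p))) \<le> degree [:0, 1 :: real:] + degree ([:0, 1:] * pderiv (pderiv p))"
    by (rule degree_mult_le)
  also have "\<dots> \<le> 1 + degree (pderiv p)"
    using degree_x_mult_pderiv_le[of "pderiv p"] by simp
  finally show ?thesis
    using False by (simp add: degree_pderiv)
qed (simp add: pderiv_eq_0_iff[THEN iffD2])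

lemma degree_pderiv_le: "degree (pderiv p) \<le> degree (p :: real poly)"
  by (simp add: degree_pderiv)

lemma coeff_pderiv_degree: "coeff (pderiv p) (degree p) = (0 :: real)"
  by (simp add: coeff_pderiv coeff_eq_0)

lemma coeff_pderiv2_degree: "coeff (pderiv (pderiv p)) (degree p) = (0 :: real)"
  using degree_pderiv_le[of p] by (simp add: coeff_pderiv coeff_eq_0)

lemma coeff_gop_numerator_degree:
  fixes \<tau> y :: "real poly"
  defines "x \<equiv> real (degree y) - real (degree \<tau>)"
  shows "coeff (gop_numerator \<alpha> \<tau> y) (degree y + degree \<tau>) = lead_coeff \<tau> * lead_coeff y * (- x * (2*\<alpha> + x))"
proof -
  define d e where "d = degree y" and "e = degree \<tau>"
  have expand: "gop_numerator \<alpha> \<tau> y = \<tau> * pderiv (pderiv y) - 2 * (pderiv \<tau> * pderiv y) + pderiv (pderiv \<tau>) * y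
      - \<tau> * ([:0, 1:] * ([:0, 1:] * pderiv (pderiv y))) + 2 * (([:0, 1:] * pderiv \<tau>) * ([:0, 1:] * pderiv y))
      - ([:0, 1:] * ([:0, 1:] * pderiv (pderiv \<tau>))) * y - smult (2*\<alpha> + 1) (\<tau> * ([:0, 1:] * pderiv y))
      + smult (2*\<alpha> - 1) (([:0, 1:] * pderiv \<tau>) * y)"
  proof -
    have "[:1, 0, -1 :: real:] * X = X - [:0, 1:] * ([:0, 1:] * X)" for X
      by simp
    then show ?thesis
      unfolding gop_numerator_def by (simp add: algebra_simps)
  qed
  have deg: "degree \<tau> \<le> e" "degree y \<le> d"
    unfolding d_def e_def by simp_all
  note deg_y = degree_x2_mult_pderiv2_le[of y, folded d_def e_def] degree_x_mult_pderiv_le[of y, folded d_def e_def]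
    degree_pderiv_le[of y, folded d_def e_def] order.trans[OF degree_pderiv_le degree_pderiv_le[of y], folded d_def e_def]
  note deg_\<tau> = degree_x2_mult_pderiv2_le[of \<tau>, folded d_def e_def] degree_x_mult_pderiv_le[of \<tau>, folded d_def e_def]
    degree_pderiv_le[of \<tau>, folded d_def e_def] order.trans[OF degree_pderiv_le degree_pderiv_le[of \<tau>], folded d_def e_def]
  have "coeff (gop_numerator \<alpha> \<tau> y) (e + d) = - coeff \<tau> e * (real d * (real d - 1) * coeff y d)
      + 2 * ((real e * coeff \<tau> e) * (real d * coeff y d)) - (real e * (real e - 1) * coeff \<tau> e) * coeff y d
      - (2*\<alpha> + 1) * (coeff \<tau> e * (real d * coeff y d)) + (2*\<alpha> - 1) * ((real e * coeff \<tau> e) * coeff y d)"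
    unfolding expand coeff_add coeff_diff coeff_smult numeral_mult_conv_smult
      coeff_mult_degree_le[OF deg(1) deg_y(4)] coeff_mult_degree_le[OF deg_\<tau>(3) deg_y(3)]
      coeff_mult_degree_le[OF deg_\<tau>(4) deg(2)] coeff_mult_degree_le[OF deg(1) deg_y(1)]
      coeff_mult_degree_le[OF deg_\<tau>(2) deg_y(2)] coeff_mult_degree_le[OF deg_\<tau>(1) deg(2)]
      coeff_mult_degree_le[OF deg(1) deg_y(2)] coeff_mult_degree_le[OF deg_\<tau>(2) deg(2)]
      coeff_x2_mult_pderiv2 coeff_x_mult_pderiv
    by (simp add: d_def e_def coeff_pderiv_degree coeff_pderiv2_degree)
  then show ?thesis
    unfolding x_def d_def e_def by (simp add: add.commute algebra_simps)
qed

lemma gop_numerator_eigenvalue: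
  fixes \<tau> y :: "real poly"
  assumes "\<tau> \<noteq> 0" and "y \<noteq> 0" and "gop_numerator \<alpha> \<tau> y = [:lam:] * \<tau> * y"
  defines "x \<equiv> real (degree y) - real (degree \<tau>)"
  shows "lam = - x * (2*\<alpha> + x)"
proof -
  have "coeff (gop_numerator \<alpha> \<tau> y) (degree y + degree \<tau>) = lam * (lead_coeff \<tau> * lead_coeff y)"
    using coeff_mult_degree_sum[of \<tau> y] assms(3) by (simp add: add.commute)
  then show ?thesis
    using coeff_gop_numerator_degree[where y = y and \<tau> = \<tau> and \<alpha> = \<alpha>] assms(1,2) unfolding x_def by simp
qed

lemma degree_eigenpoly:
  fixes \<tau> y :: "real poly"
  assumes "\<alpha> > 0" and "\<tau> \<noteq> 0" and "y \<noteq> 0" and "degree \<tau> < i"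
    and "gop_numerator \<alpha> \<tau> y = [:gegenbauer_eigenvalue \<alpha> i:] * \<tau> * y"
  shows "degree y = i + degree \<tau>"
proof -
  define x where "x = real (degree y) - real (degree \<tau>)"
  have "(x - real i) * (x + real i + 2*\<alpha>) = 0"
    using gop_numerator_eigenvalue[OF assms(2,3,5)] unfolding x_def by (simp add: algebra_simps)
  moreover have "x + real i + 2*\<alpha> > 0"
    unfolding x_def using assms(1,4) by simp
  ultimately show ?thesis
    unfolding x_def by simp
qed

lemma exceptional_gegenbauer_operatorI:
  assumes "\<tau> \<noteq> 0" and "\<And>i. \<pi> i \<noteq> 0" and "\<And>i. \<exists>lam. is_eigenfunction \<alpha> \<tau> (\<pi> i) lam"
    and "\<And>i. degree (\<pi> i) = i + d"
  shows "exceptional_gegenbauer_operator \<alpha> \<tau>"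
  unfolding exceptional_gegenbauer_operator_def
proof (intro conjI exI[of _ \<pi>] allI)
  show "inj (\<lambda>i. degree (\<pi> i))"
    by (rule injI) (simp add: assms(4))
  have "x \<in> range (\<lambda>i. degree (\<pi> i))" if "d \<le> x" for x
    using that assms(4)[of "x - d"] by (metis le_add_diff_inverse2 rangeI)
  then have "UNIV - range (\<lambda>i. degree (\<pi> i)) \<subseteq> {..<d}"
    by (auto simp: not_less[symmetric])
  then show "finite (UNIV - range (\<lambda>i. degree (\<pi> i)))"
    by (rule finite_subset) simp
qed (use assms in auto)

section \<open>Adjugate deformations of a Sturm--Liouville system\<close>

text \<open>\<open>R\<close> abstracts \<open>R\<^sub>m\<close>: \<open>\<Phi>\<close>, \<open>t\<close>, \<open>\<mu>\<close>, \<open>W\<close> and \<open>p\<close> stand for the Gegenbauer polynomials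
  \<open>C\<^sub>m\<^sub>a\<close>, the parameters, their eigenvalues, the weight and \<open>(1 - z\<^sup>2) W\<close>.\<close>
locale sturm_liouville_deformation =
  fixes n :: nat and R :: "real poly mat" and W p :: "real poly"
    and \<Phi> :: "nat \<Rightarrow> real poly" and t \<mu> :: "nat \<Rightarrow> real"
  assumes R_carrier: "R \<in> carrier_mat n n"
    and det_nonzero: "det R \<noteq> 0"
    and pderiv_R: "\<And>a b. a < n \<Longrightarrow> b < n \<Longrightarrow> pderiv (R $$ (a, b)) = [:t b:] * W * \<Phi> a * \<Phi> b"
    and R_wronskian: "\<And>a b. a < n \<Longrightarrow> b < n \<Longrightarrow>
      [:\<mu> a - \<mu> b:] * R $$ (a, b) = [:t b:] * p * (pderiv (\<Phi> a) * \<Phi> b - \<Phi> a * pderiv (\<Phi> b))"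
    and R_symmetric: "\<And>a b. a < n \<Longrightarrow> b < n \<Longrightarrow> [:t a:] * R $$ (a, b) = [:t b:] * R $$ (b, a)"
    and sturm_liouville: "\<And>a. a < n \<Longrightarrow> pderiv (p * pderiv (\<Phi> a)) = [:\<mu> a:] * W * \<Phi> a"
begin

text \<open>With these rules the simplifier would turn \<open>[:c:] * q\<close> into \<open>smult c q\<close> and reassociate,
  which breaks the index bookkeeping below.\<close>
declare mult_pCons_left [simp del] mult_pCons_right [simp del]

abbreviation \<tau> :: "real poly" where "\<tau> \<equiv> det R"

definition A :: "nat \<Rightarrow> nat \<Rightarrow> real poly" where
  "A a b = adj_mat R $$ (a, b)"

definition Q :: "nat \<Rightarrow> real poly" where
  "Q e = (\<Sum>b<n. A e b * \<Phi> b)"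

definition S :: "real poly" where
  "S = (\<Sum>b<n. [:t b:] * \<Phi> b * Q b)"

definition K :: "real poly" where
  "K = (\<Sum>b<n. [:t b:] * pderiv (\<Phi> b) * Q b)"

lemma R_A: "a < n \<Longrightarrow> b < n \<Longrightarrow> (\<Sum>c<n. R $$ (a, c) * A c b) = (if a = b then \<tau> else 0)"
  unfolding A_def by (rule adj_mat_entries(1)[OF R_carrier])

lemma A_R: "a < n \<Longrightarrow> b < n \<Longrightarrow> (\<Sum>c<n. A a c * R $$ (c, b)) = (if a = b then \<tau> else 0)"
  unfolding A_def by (rule adj_mat_entries(2)[OF R_carrier])

lemma A_symmetric:
  assumes a: "a < n" and b: "b < n"
  shows "[:t a:] * A a b = [:t b:] * A b a"
proof -
  have "\<tau> * ([:t b:] * A b a) = (\<Sum>c<n. A c a * [:t c:] * (if c = b then \<tau> else 0))"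
    by (subst sum_mult_delta_right[OF b]) (simp add: mult_ac)
  also have "\<dots> = (\<Sum>c<n. A c a * [:t c:] * (\<Sum>d<n. R $$ (c, d) * A d b))"
    using b by (simp add: R_A)
  also have "\<dots> = (\<Sum>c<n. \<Sum>d<n. A c a * ([:t c:] * R $$ (c, d)) * A d b)"
    by (simp add: sum_distrib_left mult_ac)
  also have "\<dots> = (\<Sum>c<n. \<Sum>d<n. A c a * ([:t d:] * R $$ (d, c)) * A d b)"
    by (intro sum.cong refl, subst R_symmetric) auto
  also have "\<dots> = (\<Sum>d<n. [:t d:] * A d b * (\<Sum>c<n. R $$ (d, c) * A c a))"
    by (subst sum.swap) (simp add: sum_distrib_left mult_ac)
  also have "\<dots> = (\<Sum>d<n. [:t d:] * A d b * (if d = a then \<tau> else 0))"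
    using a by (simp add: R_A)
  also have "\<dots> = \<tau> * ([:t a:] * A a b)"
    by (subst sum_mult_delta_right[OF a]) (simp add: mult_ac)
  finally have "\<tau> * ([:t b:] * A b a) = \<tau> * ([:t a:] * A a b)" .
  then show ?thesis
    using det_nonzero by simp
qed

lemma pderiv_tau: "pderiv \<tau> = W * S"
proof -
  have "pderiv \<tau> = (\<Sum>a<n. \<Sum>b<n. A b a * ([:t b:] * W * \<Phi> a * \<Phi> b))"
    unfolding pderiv_det[OF R_carrier] A_def by (intro sum.cong refl) (simp add: pderiv_R)
  also have "\<dots> = W * S"
    unfolding S_def Q_def by (subst sum.swap) (simp add: sum_distrib_left mult_ac)
  finally show ?thesis .
qed


lemma tau_pderiv_A:
  assumes e: "e < n" and b: "b < n"
  shows "\<tau> * pderiv (A e b) = A e b * pderiv \<tau> - (\<Sum>c<n. A e c * (\<Sum>a<n. pderiv (R $$ (c, a)) * A a b))"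
proof -
  have pderiv_R_A: "(\<Sum>a<n. pderiv (R $$ (c, a)) * A a b) + (\<Sum>a<n. R $$ (c, a) * pderiv (A a b))
      = (if c = b then pderiv \<tau> else 0)" if "c < n" for c
  proof -
    have "pderiv (\<Sum>a<n. R $$ (c, a) * A a b) = (if c = b then pderiv \<tau> else 0)"
      using R_A[OF that b] by simp
    then show ?thesis
      by (simp add: pderiv_sum pderiv_mult sum.distrib mult_ac)
  qed
  have "\<tau> * pderiv (A e b) = (\<Sum>a<n. (if e = a then \<tau> else 0) * pderiv (A a b))"
    by (rule sum_mult_delta_left[OF e, symmetric])
  also have "\<dots> = (\<Sum>a<n. (\<Sum>c<n. A e c * R $$ (c, a)) * pderiv (A a b))"
    by (intro sum.cong refl) (simp add: A_R e)
  also have "\<dots> = (\<Sum>c<n. A e c * (\<Sum>a<n. R $$ (c, a) * pderiv (A a b)))"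
    by (simp add: sum_distrib_left sum_distrib_right mult_ac) (rule sum.swap)
  also have "\<dots> = (\<Sum>c<n. A e c * ((if c = b then pderiv \<tau> else 0) - (\<Sum>a<n. pderiv (R $$ (c, a)) * A a b)))"
    by (intro sum.cong refl) (simp add: pderiv_R_A[symmetric])
  also have "\<dots> = A e b * pderiv \<tau> - (\<Sum>c<n. A e c * (\<Sum>a<n. pderiv (R $$ (c, a)) * A a b))"
    by (simp only: right_diff_distrib sum_subtractf sum_mult_delta_right[OF b])
  finally show ?thesis .
qed

lemma tau_sum_pderiv_A:
  assumes e: "e < n"
  shows "\<tau> * (\<Sum>b<n. pderiv (A e b) * v b)
    = W * (S * (\<Sum>b<n. A e b * v b) - Q e * (\<Sum>c<n. [:t c:] * \<Phi> c * (\<Sum>b<n. A c b * v b)))"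
proof -
  have "\<tau> * (\<Sum>b<n. pderiv (A e b) * v b)
      = (\<Sum>b<n. (A e b * pderiv \<tau> - (\<Sum>c<n. A e c * (\<Sum>a<n. pderiv (R $$ (c, a)) * A a b))) * v b)"
  proof -
    have "\<tau> * (\<Sum>b<n. pderiv (A e b) * v b) = (\<Sum>b<n. (\<tau> * pderiv (A e b)) * v b)"
      by (simp add: sum_distrib_left mult.assoc)
    then show ?thesis
      by (simp add: tau_pderiv_A e)
  qed
  also have "\<dots> = (\<Sum>b<n. A e b * pderiv \<tau> * v b)
      - (\<Sum>b<n. (\<Sum>c<n. A e c * (\<Sum>a<n. pderiv (R $$ (c, a)) * A a b)) * v b)"
    by (simp only: left_diff_distrib sum_subtractf)
  also have "(\<Sum>b<n. A e b * pderiv \<tau> * v b) = pderiv \<tau> * (\<Sum>b<n. A e b * v b)"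
    by (simp add: sum_distrib_left mult_ac)
  also have "(\<Sum>b<n. (\<Sum>c<n. A e c * (\<Sum>a<n. pderiv (R $$ (c, a)) * A a b)) * v b)
      = (\<Sum>b<n. \<Sum>c<n. \<Sum>a<n. A e c * pderiv (R $$ (c, a)) * A a b * v b)"
    by (simp add: sum_distrib_left sum_distrib_right mult_ac)
  also have "\<dots> = (\<Sum>b<n. \<Sum>c<n. \<Sum>a<n. A e c * ([:t a:] * W * \<Phi> c * \<Phi> a) * A a b * v b)"
    by (intro sum.cong refl) (simp add: pderiv_R)
  also have "(\<Sum>b<n. \<Sum>c<n. \<Sum>a<n. A e c * ([:t a:] * W * \<Phi> c * \<Phi> a) * A a b * v b)
      = (\<Sum>c<n. \<Sum>a<n. \<Sum>b<n. A e c * ([:t a:] * W * \<Phi> c * \<Phi> a) * A a b * v b)"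
    by (subst sum.swap) (intro sum.cong refl sum.swap)
  also have "\<dots> = (\<Sum>c<n. A e c * \<Phi> c * (W * (\<Sum>a<n. [:t a:] * \<Phi> a * (\<Sum>b<n. A a b * v b))))"
    by (intro sum.cong refl) (simp add: sum_distrib_left sum_distrib_right mult_ac)
  also have "\<dots> = W * Q e * (\<Sum>c<n. [:t c:] * \<Phi> c * (\<Sum>b<n. A c b * v b))"
    unfolding Q_def sum_distrib_right[symmetric] by (simp add: mult_ac)
  finally show ?thesis
    unfolding pderiv_tau by (simp add: algebra_simps)
qed

text \<open>The derivatives of the adjugate entries are annihilated by \<open>\<Phi>\<close>.\<close>
lemma pderiv_Q:
  assumes e: "e < n"
  shows "pderiv (Q e) = (\<Sum>b<n. A e b * pderiv (\<Phi> b))"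
proof -
  have "\<tau> * (\<Sum>b<n. pderiv (A e b) * \<Phi> b) = 0"
    unfolding tau_sum_pderiv_A[OF e] by (simp only: Q_def[symmetric]) (simp add: S_def mult_ac)
  then have "(\<Sum>b<n. pderiv (A e b) * \<Phi> b) = 0"
    using det_nonzero by simp
  then show ?thesis
    unfolding Q_def by (simp add: pderiv_sum pderiv_mult sum.distrib mult_ac)
qed

lemma sum_Phi_pderiv_Q: "(\<Sum>b<n. [:t b:] * \<Phi> b * pderiv (Q b)) = K"
proof -
  have "(\<Sum>b<n. [:t b:] * \<Phi> b * pderiv (Q b)) = (\<Sum>b<n. \<Sum>c<n. \<Phi> b * ([:t b:] * A b c) * pderiv (\<Phi> c))"
    by (simp add: pderiv_Q sum_distrib_left mult_ac)
  also have "\<dots> = (\<Sum>b<n. \<Sum>c<n. \<Phi> b * ([:t c:] * A c b) * pderiv (\<Phi> c))"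
    by (intro sum.cong refl) (simp add: A_symmetric)
  also have "\<dots> = K"
    unfolding K_def Q_def by (subst sum.swap) (simp add: sum_distrib_left mult_ac)
  finally show ?thesis .
qed

lemma pderiv_S: "pderiv S = 2 * K"
proof -
  have "pderiv S = (\<Sum>b<n. [:t b:] * pderiv (\<Phi> b) * Q b) + (\<Sum>b<n. [:t b:] * \<Phi> b * pderiv (Q b))"
    unfolding S_def by (simp add: pderiv_sum pderiv_mult sum.distrib algebra_simps)
  then show ?thesis
    unfolding sum_Phi_pderiv_Q K_def by simp
qed

lemma tau_A_commutator:
  assumes e: "e < n" and b: "b < n"
  shows "\<tau> * (A e b * [:\<mu> b:]) - \<tau> * ([:\<mu> e:] * A e b)
    = (\<Sum>a<n. \<Sum>c<n. A e a * ([:\<mu> a - \<mu> c:] * R $$ (a, c)) * A c b)"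
proof -
  have "(\<Sum>a<n. \<Sum>c<n. A e a * [:\<mu> a:] * R $$ (a, c) * A c b)
      = (\<Sum>a<n. A e a * [:\<mu> a:] * (\<Sum>c<n. R $$ (a, c) * A c b))"
    by (simp add: sum_distrib_left mult_ac)
  also have "\<dots> = (\<Sum>a<n. A e a * [:\<mu> a:] * (if a = b then \<tau> else 0))"
    by (intro sum.cong refl) (simp add: R_A b)
  also have "\<dots> = \<tau> * (A e b * [:\<mu> b:])"
    by (subst sum_mult_delta_right[OF b]) (simp add: mult_ac)
  finally have 1: "(\<Sum>a<n. \<Sum>c<n. A e a * [:\<mu> a:] * R $$ (a, c) * A c b) = \<tau> * (A e b * [:\<mu> b:])" .
  have "(\<Sum>a<n. \<Sum>c<n. A e a * [:\<mu> c:] * R $$ (a, c) * A c b)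
      = (\<Sum>c<n. (\<Sum>a<n. A e a * R $$ (a, c)) * ([:\<mu> c:] * A c b))"
    by (subst sum.swap) (simp add: sum_distrib_left sum_distrib_right mult_ac)
  also have "\<dots> = \<tau> * ([:\<mu> e:] * A e b)"
    using e by (simp add: A_R sum_mult_delta_left)
  finally have 2: "(\<Sum>a<n. \<Sum>c<n. A e a * [:\<mu> c:] * R $$ (a, c) * A c b) = \<tau> * ([:\<mu> e:] * A e b)" .
  have diff_const: "[:\<mu> a - \<mu> c:] = [:\<mu> a:] - [:\<mu> c:]" for a c
    by simp
  show ?thesis
    unfolding 1[symmetric] 2[symmetric] diff_const
    by (simp add: algebra_simps sum_subtractf del: diff_pCons)
qed


lemma tau_sum_A_mu_Phi:
  assumes e: "e < n"
  shows "\<tau> * (\<Sum>b<n. A e b * ([:\<mu> b:] * \<Phi> b)) = [:\<mu> e:] * \<tau> * Q e + p * (pderiv (Q e) * S - Q e * K)"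
proof -
  have "\<tau> * (\<Sum>b<n. A e b * ([:\<mu> b:] * \<Phi> b)) - [:\<mu> e:] * \<tau> * Q e
      = (\<Sum>b<n. (\<tau> * (A e b * [:\<mu> b:]) - \<tau> * ([:\<mu> e:] * A e b)) * \<Phi> b)"
    unfolding Q_def by (simp add: sum_distrib_left algebra_simps sum_subtractf)
  also have "\<dots> = (\<Sum>b<n. (\<Sum>a<n. \<Sum>c<n. A e a * ([:\<mu> a - \<mu> c:] * R $$ (a, c)) * A c b) * \<Phi> b)"
    by (intro sum.cong refl) (simp add: tau_A_commutator e)
  also have "\<dots> = (\<Sum>b<n. \<Sum>a<n. \<Sum>c<n. A e a * ([:t c:] * p * (pderiv (\<Phi> a) * \<Phi> c - \<Phi> a * pderiv (\<Phi> c))) * A c b * \<Phi> b)"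
    by (intro sum.cong refl) (simp add: R_wronskian sum_distrib_right del: diff_pCons)
  also have "\<dots> = (\<Sum>a<n. \<Sum>c<n. \<Sum>b<n. A e a * ([:t c:] * p * (pderiv (\<Phi> a) * \<Phi> c - \<Phi> a * pderiv (\<Phi> c))) * A c b * \<Phi> b)"
    by (subst sum.swap) (intro sum.cong refl sum.swap)
  also have "\<dots> = (\<Sum>a<n. \<Sum>c<n. A e a * ([:t c:] * p * (pderiv (\<Phi> a) * \<Phi> c - \<Phi> a * pderiv (\<Phi> c))) * Q c)"
    unfolding Q_def by (simp add: sum_distrib_left mult.assoc)
  also have "\<dots> = p * ((\<Sum>a<n. A e a * pderiv (\<Phi> a)) * S - (\<Sum>a<n. A e a * \<Phi> a) * K)"
    unfolding S_def K_def sum_product by (simp add: sum_distrib_left algebra_simps sum_subtractf)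
  also have "\<dots> = p * (pderiv (Q e) * S - Q e * K)"
    by (simp only: pderiv_Q[OF e]) (simp add: Q_def)
  finally show ?thesis
    by (simp add: algebra_simps)
qed

lemma tau_pderiv_p_pderiv_Q:
  assumes e: "e < n"
  shows "\<tau> * pderiv (p * pderiv (Q e)) = W * ([:\<mu> e:] * \<tau> * Q e + 2 * p * (S * pderiv (Q e) - Q e * K))"
proof -
  have pQ: "p * pderiv (Q e) = (\<Sum>b<n. A e b * (p * pderiv (\<Phi> b)))"
    by (simp add: pderiv_Q e sum_distrib_left mult_ac)
  have "pderiv (p * pderiv (Q e))
      = (\<Sum>b<n. pderiv (A e b) * (p * pderiv (\<Phi> b))) + (\<Sum>b<n. A e b * pderiv (p * pderiv (\<Phi> b)))"
    unfolding pQ pderiv_sum pderiv_mult[of "A e _"] sum.distrib by (simp add: mult.commute add.commute)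
  also have "(\<Sum>b<n. A e b * pderiv (p * pderiv (\<Phi> b))) = W * (\<Sum>b<n. A e b * ([:\<mu> b:] * \<Phi> b))"
    by (simp add: sturm_liouville sum_distrib_left mult_ac)
  finally have expand: "\<tau> * pderiv (p * pderiv (Q e))
      = \<tau> * (\<Sum>b<n. pderiv (A e b) * (p * pderiv (\<Phi> b))) + W * (\<tau> * (\<Sum>b<n. A e b * ([:\<mu> b:] * \<Phi> b)))"
    by (simp add: algebra_simps)
  have "(\<Sum>c<n. [:t c:] * \<Phi> c * (\<Sum>b<n. A c b * (p * pderiv (\<Phi> b)))) = p * K"
    unfolding sum_Phi_pderiv_Q[symmetric] sum_distrib_left
    by (intro sum.cong refl) (simp add: pderiv_Q sum_distrib_left mult_ac)
  then have "\<tau> * (\<Sum>b<n. pderiv (A e b) * (p * pderiv (\<Phi> b))) = W * (S * (p * pderiv (Q e)) - Q e * (p * K))"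
    unfolding tau_sum_pderiv_A[OF e] pQ[symmetric] by simp
  then show ?thesis
    unfolding expand tau_sum_A_mu_Phi[OF e] by (simp add: algebra_simps)
qed


lemma gop_numerator_Q:
  assumes e: "e < n" and p: "p = [:1, 0, -1:] * W" and W: "W \<noteq> 0"
    and pderiv_W: "[:1, 0, -1:] * pderiv W = - smult (2*\<alpha> - 1) ([:0, 1:] * W)"
  shows "gop_numerator \<alpha> \<tau> (Q e) = [:\<mu> e:] * \<tau> * Q e"
proof -
  define u :: "real poly" where "u = [:1, 0, -1:]"
  define z :: "real poly" where "z = [:0, 1:]"
  have pderiv_u: "pderiv u = - smult 2 z"
    unfolding u_def z_def by (simp add: pderiv_pCons)
  have u_pderiv_W: "u * pderiv W = - smult (2*\<alpha> - 1) (z * W)"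
    unfolding u_def z_def pderiv_W ..
  have pderiv_p: "pderiv p = - smult (2*\<alpha> + 1) (z * W)"
  proof -
    have "pderiv p = pderiv u * W + u * pderiv W"
      unfolding p u_def[symmetric] by (simp add: pderiv_mult ac_simps)
    also have "\<dots> = - smult (2*\<alpha> + 1) (z * W)"
      unfolding pderiv_u u_pderiv_W by (simp add: algebra_simps flip: smult_add_left)
    finally show ?thesis .
  qed
  have pderiv2_tau: "pderiv (pderiv \<tau>) = pderiv W * S + W * (2 * K)"
    unfolding pderiv_tau by (simp add: pderiv_mult pderiv_S algebra_simps)
  have p_pderiv2_Q: "p * pderiv (pderiv (Q e)) = pderiv (p * pderiv (Q e)) - pderiv p * pderiv (Q e)"
    by (simp add: pderiv_mult algebra_simps)
  have "W * gop_numerator \<alpha> \<tau> (Q e) = \<tau> * (p * pderiv (pderiv (Q e))) - 2 * p * pderiv \<tau> * pderiv (Q e)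
      + (u * pderiv W) * W * S * Q e + 2 * W * p * K * Q e
      - smult (2*\<alpha> + 1) (z * W * \<tau> * pderiv (Q e)) + smult (2*\<alpha> - 1) (z * W * pderiv \<tau> * Q e)"
    unfolding gop_numerator_def pderiv2_tau p u_def z_def by (simp add: algebra_simps)
  also have "\<dots> = W * ([:\<mu> e:] * \<tau> * Q e)"
    unfolding p_pderiv2_Q u_pderiv_W right_diff_distrib tau_pderiv_p_pderiv_Q[OF e] pderiv_p pderiv_tau
    by (simp add: algebra_simps)
  finally show ?thesis
    using W by simp
qed

end

section \<open>Exceptional Gegenbauer polynomials\<close>

lemma pderiv_poly_antideriv: "pderiv (poly_antideriv p) = p"
proof -
  have "pderiv (poly_antideriv p) = (\<Sum>j\<le>degree p. monom (coeff p j) j)"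
    unfolding poly_antideriv_def pderiv_sum pderiv_monom
    by (intro sum.cong refl) (simp add: field_simps del: of_nat_Suc)
  also have "\<dots> = p"
    by (rule poly_as_sum_of_monoms)
  finally show ?thesis .
qed

lemma pderiv_rho: "pderiv (rho k i j) = gegenbauer (real k + 1/2) i * gegenbauer (real k + 1/2) j * weight k"
  unfolding rho_def Let_def by (simp add: pderiv_diff pderiv_poly_antideriv)

lemma poly_rho_minus_one: "poly (rho k i j) (-1) = 0"
  unfolding rho_def Let_def by simp

lemma rho_commute: "rho k i j = rho k j i"
  unfolding rho_def Let_def by (simp add: mult_ac)

lemma weight_nonzero: "weight k \<noteq> 0"
  unfolding weight_def by simp

lemma pderiv_weight: "[:1, 0, -1:] * pderiv (weight k) = - smult (2 * real k) ([:0, 1:] * weight k)"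
proof (cases k)
  case (Suc m)
  have "pderiv (weight k) = smult (real (Suc m)) ([:1, 0, -1:] ^ m) * [:0, -2:]"
    unfolding weight_def Suc pderiv_power_Suc by (simp add: pderiv_pCons)
  then show ?thesis
    unfolding weight_def Suc by (simp add: algebra_simps)
qed (simp add: weight_def)

lemma gegenbauer_sturm_liouville:
  fixes k i :: nat
  defines "\<alpha> \<equiv> real k + 1/2"
  shows "pderiv ([:1, 0, -1:] * weight k * pderiv (gegenbauer \<alpha> i))
    = smult (gegenbauer_eigenvalue \<alpha> i) (weight k * gegenbauer \<alpha> i)"
proof -
  define C where "C = gegenbauer \<alpha> i"
  have "gegenbauer_op \<alpha> C = smult (gegenbauer_eigenvalue \<alpha> i) C"
    unfolding C_def by (rule gegenbauer_op_gegenbauer) (simp add: \<alpha>_def)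
  then have C'': "[:1, 0, -1:] * pderiv (pderiv C) = smult (gegenbauer_eigenvalue \<alpha> i) C + smult (2*\<alpha> + 1) ([:0, 1:] * pderiv C)"
    unfolding gegenbauer_op_def by (simp add: algebra_simps)
  have "pderiv ([:1, 0, -1:] * weight k * pderiv C) = pderiv [:1, 0, -1:] * weight k * pderiv C
      + ([:1, 0, -1:] * pderiv (weight k)) * pderiv C + weight k * ([:1, 0, -1:] * pderiv (pderiv C))"
  proof -
    have "pderiv (a * b * c) = pderiv a * b * c + (a * pderiv b) * c + b * (a * pderiv c)" for a b c :: "real poly"
      by (simp add: pderiv_mult algebra_simps)
    then show ?thesis .
  qed
  also have "\<dots> = smult (gegenbauer_eigenvalue \<alpha> i) (weight k * C)"
    unfolding C'' pderiv_weight by (simp add: pderiv_pCons \<alpha>_def algebra_simps) (simp flip: smult_add_left)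
  finally show ?thesis
    unfolding C_def .
qed

lemma poly_eq_by_pderiv:
  assumes "pderiv p = pderiv q" and "poly p x = poly q x"
  shows "p = (q :: real poly)"
proof -
  obtain c where "p - q = [:c:]"
    using assms(1) pderiv_iszero[of "p - q"] by (auto simp: pderiv_diff)
  moreover have "c = 0"
    using assms(2) arg_cong[OF calculation, of "\<lambda>r. poly r x"] by simp
  ultimately show ?thesis
    by simp
qed

text \<open>The Christoffel--Darboux-type identity for the integrals \<open>\<rho>\<close>: both sides vanish at \<open>-1\<close>
  and have the same derivative by the Sturm--Liouville form of the Gegenbauer equation.\<close>
lemma rho_wronskian:
  fixes k i j :: nat
  defines "\<alpha> \<equiv> real k + 1/2"
  shows "smult (gegenbauer_eigenvalue \<alpha> i - gegenbauer_eigenvalue \<alpha> j) (rho k i j)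
    = [:1, 0, -1:] * weight k * (pderiv (gegenbauer \<alpha> i) * gegenbauer \<alpha> j - gegenbauer \<alpha> i * pderiv (gegenbauer \<alpha> j))"
proof (rule poly_eq_by_pderiv[where x = "-1"])
  let ?Ci = "gegenbauer \<alpha> i" and ?Cj = "gegenbauer \<alpha> j" and ?pW = "[:1, 0, -1:] * weight k"
  have "pderiv (?pW * (pderiv ?Ci * ?Cj - ?Ci * pderiv ?Cj))
      = pderiv (?pW * pderiv ?Ci) * ?Cj - ?Ci * pderiv (?pW * pderiv ?Cj)"
  proof -
    have "pderiv (P * (pderiv X * Y - X * pderiv Y)) = pderiv (P * pderiv X) * Y - X * pderiv (P * pderiv Y)"
      for P X Y :: "real poly"
      by (simp add: pderiv_mult pderiv_diff algebra_simps)
    then show ?thesis .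
  qed
  also have "\<dots> = smult (gegenbauer_eigenvalue \<alpha> i) (weight k * ?Ci) * ?Cj
      - ?Ci * smult (gegenbauer_eigenvalue \<alpha> j) (weight k * ?Cj)"
    unfolding \<alpha>_def gegenbauer_sturm_liouville ..
  also have "\<dots> = smult (gegenbauer_eigenvalue \<alpha> i - gegenbauer_eigenvalue \<alpha> j) (?Ci * ?Cj * weight k)"
    by (simp only: smult_diff_left mult_smult_left mult_smult_right mult_ac)
  finally show "pderiv (smult (gegenbauer_eigenvalue \<alpha> i - gegenbauer_eigenvalue \<alpha> j) (rho k i j))
      = pderiv (?pW * (pderiv ?Ci * ?Cj - ?Ci * pderiv ?Cj))"
    by (simp add: pderiv_smult pderiv_rho \<alpha>_def)
qed (simp add: poly_rho_minus_one)

lemma Rmat_carrier: "Rmat k ms ps \<in> carrier_mat (length ms) (length ms)"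
  unfolding Rmat_def by simp

lemma index_Rmat: "a < length ms \<Longrightarrow> b < length ms \<Longrightarrow>
    Rmat k ms ps $$ (a, b) = (if a = b then 1 else 0) + smult (ps ! b) (rho k (ms ! a) (ms ! b))"
  unfolding Rmat_def by simp

lemma index_Qvec:
  assumes "e < length ms"
  shows "Qvec k ms ps $ e = (\<Sum>b<length ms. adj_mat (Rmat k ms ps) $$ (e, b) * gegenbauer (real k + 1/2) (ms ! b))"
  using adj_mat(1)[OF Rmat_carrier[of k ms ps]] assms unfolding Qvec_def
  by (simp add: scalar_prod_def atLeast0LessThan)

lemma Rmat_at_minus_one: "map_mat (\<lambda>q. poly q (-1)) (Rmat k ms ps) = 1\<^sub>m (length ms)"
  unfolding Rmat_def by (intro eq_matI) (auto simp: poly_rho_minus_one)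

lemma poly_tau_minus_one: "poly (tau k ms ps) (-1) = 1"
  unfolding tau_def poly_det Rmat_at_minus_one by simp

lemma tau_nonzero: "tau k ms ps \<noteq> 0"
  using poly_tau_minus_one[of k ms ps] by auto

lemma poly_Qvec_minus_one:
  assumes e: "e < length ms"
  shows "poly (Qvec k ms ps $ e) (-1) = poly (gegenbauer (real k + 1/2) (ms ! e)) (-1)"
proof -
  have "poly (Qvec k ms ps $ e) (-1)
      = (\<Sum>b<length ms. (if e = b then 1 else 0) * poly (gegenbauer (real k + 1/2) (ms ! b)) (-1))"
    unfolding index_Qvec[OF e] poly_sum
    by (intro sum.cong refl) (simp add: poly_adj_mat[OF Rmat_carrier e] Rmat_at_minus_one adj_mat_one e)
  then show ?thesis
    by (simp add: sum_mult_delta_left[OF e])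
qed

lemma gop_numerator_Qvec:
  fixes k :: nat
  defines "\<alpha> \<equiv> real k + 1/2"
  assumes e: "e < length ms"
  shows "gop_numerator \<alpha> (tau k ms ps) (Qvec k ms ps $ e)
    = [:gegenbauer_eigenvalue \<alpha> (ms ! e):] * tau k ms ps * Qvec k ms ps $ e"
proof -
  interpret sturm_liouville_deformation "length ms" "Rmat k ms ps" "weight k" "[:1, 0, -1:] * weight k"
    "\<lambda>a. gegenbauer \<alpha> (ms ! a)" "\<lambda>b. ps ! b" "\<lambda>a. gegenbauer_eigenvalue \<alpha> (ms ! a)"
  proof unfold_locales
    fix a b assume a: "a < length ms" and b: "b < length ms"
    show "pderiv (Rmat k ms ps $$ (a, b)) = [:ps ! b:] * weight k * gegenbauer \<alpha> (ms ! a) * gegenbauer \<alpha> (ms ! b)"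
      using a b by (simp add: index_Rmat pderiv_add pderiv_smult pderiv_rho \<alpha>_def mult_ac)
    show "[:ps ! a:] * Rmat k ms ps $$ (a, b) = [:ps ! b:] * Rmat k ms ps $$ (b, a)"
      using a b by (auto simp: index_Rmat rho_commute mult.commute)
    show "[:gegenbauer_eigenvalue \<alpha> (ms ! a) - gegenbauer_eigenvalue \<alpha> (ms ! b):] * Rmat k ms ps $$ (a, b)
        = [:ps ! b:] * ([:1, 0, -1:] * weight k) * (pderiv (gegenbauer \<alpha> (ms ! a)) * gegenbauer \<alpha> (ms ! b)
          - gegenbauer \<alpha> (ms ! a) * pderiv (gegenbauer \<alpha> (ms ! b)))"
      using a b rho_wronskian[where k = k and i = "ms ! a" and j = "ms ! b"] by (cases "a = b") (auto simp: index_Rmat \<alpha>_def)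
  next
    fix a
    show "pderiv ([:1, 0, -1:] * weight k * pderiv (gegenbauer \<alpha> (ms ! a)))
        = [:gegenbauer_eigenvalue \<alpha> (ms ! a):] * weight k * gegenbauer \<alpha> (ms ! a)"
      unfolding \<alpha>_def gegenbauer_sturm_liouville by simp
  qed (auto simp: Rmat_carrier tau_nonzero[unfolded tau_def])
  have "gop_numerator \<alpha> (det (Rmat k ms ps)) (Q e) = [:gegenbauer_eigenvalue \<alpha> (ms ! e):] * det (Rmat k ms ps) * Q e"
    using pderiv_weight[of k] e by (intro gop_numerator_Q) (auto simp: weight_nonzero \<alpha>_def)
  moreover have "Q e = Qvec k ms ps $ e"
    unfolding Q_def A_def by (simp add: index_Qvec[OF e] \<alpha>_def)
  ultimately show ?thesis
    unfolding tau_def by simp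
qed

text \<open>Only the last column of the extended matrix carries the parameter \<open>s\<close>, and the
  last row of its adjugate consists of cofactors that delete that column.\<close>
lemma xgegenbauer_parameter_independent:
  assumes len: "length ps = length ms"
  shows "xgegenbauer k ms ps s i = xgegenbauer k ms ps 0 i"
proof -
  let ?n = "length ms" and ?R = "\<lambda>s. Rmat k (ms @ [i]) (ps @ [s])"
  have "mat_delete (?R s) b ?n = mat_delete (?R 0) b ?n" if "b < Suc ?n" for b
    unfolding mat_delete_def Rmat_def using len by (intro eq_matI) (auto simp: nth_append)
  then have "adj_mat (?R s) $$ (?n, b) = adj_mat (?R 0) $$ (?n, b)" if "b < Suc ?n" for b
    using that unfolding adj_mat_def cofactor_def Rmat_def by simp
  then show ?thesis
    unfolding xgegenbauer_def index_Qvec[of ?n "ms @ [i]", simplified] by simp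
qed

lemma tau_append_zero:
  assumes len: "length ps = length ms"
  shows "tau k (ms @ [i]) (ps @ [0]) = tau k ms ps"
proof -
  let ?n = "length ms" and ?R = "Rmat k (ms @ [i]) (ps @ [0])"
  have R: "?R \<in> carrier_mat (Suc ?n) (Suc ?n)"
    using Rmat_carrier[of k "ms @ [i]" "ps @ [0]"] by simp
  have "det ?R = (\<Sum>a<Suc ?n. (if ?n = a then 1 else 0) * cofactor ?R a ?n)"
    unfolding laplace_expansion_column[OF R lessI]
    by (intro sum.cong refl) (use len in \<open>auto simp: Rmat_def nth_append\<close>)
  also have "\<dots> = det (mat_delete ?R ?n ?n)"
    by (subst sum_mult_delta_left) (auto simp: cofactor_def)
  also have "mat_delete ?R ?n ?n = Rmat k ms ps"
    unfolding mat_delete_def Rmat_def using len by (intro eq_matI) (auto simp: nth_append)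
  finally show ?thesis
    unfolding tau_def .
qed

lemma gop_numerator_xgegenbauer:
  fixes k :: nat
  defines "\<alpha> \<equiv> real k + 1/2"
  assumes len: "length ps = length ms"
  shows "gop_numerator \<alpha> (tau k ms ps) (xgegenbauer k ms ps s i)
    = [:gegenbauer_eigenvalue \<alpha> i:] * tau k ms ps * xgegenbauer k ms ps s i"
  using gop_numerator_Qvec[of "length ms" "ms @ [i]" k "ps @ [0]"]
  unfolding xgegenbauer_parameter_independent[OF len, of k s i]
  unfolding xgegenbauer_def tau_append_zero[OF len] \<alpha>_def by simp

lemma poly_xgegenbauer_minus_one_nonzero:
  assumes len: "length ps = length ms"
  shows "poly (xgegenbauer k ms ps s i) (-1) \<noteq> 0"
  using poly_Qvec_minus_one[of "length ms" "ms @ [i]" k "ps @ [0]"]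
    poly_gegenbauer_minus_one_nonzero[of "real k + 1/2" i]
  unfolding xgegenbauer_parameter_independent[OF len, of k s i]
  unfolding xgegenbauer_def by simp

lemma degree_xgegenbauer:
  assumes "length ps = length ms" and "degree (tau k ms ps) < i"
  shows "degree (xgegenbauer k ms ps s i) = i + degree (tau k ms ps)"
proof (rule degree_eigenpoly[where \<alpha> = "real k + 1/2"])
  show "xgegenbauer k ms ps s i \<noteq> 0"
    using poly_xgegenbauer_minus_one_nonzero[OF assms(1), of k s i] by auto
qed (use assms gop_numerator_xgegenbauer[OF assms(1)] tau_nonzero in auto)

theorem mainTheorem16:
  fixes k :: nat and ms :: "nat list" and t :: "nat \<Rightarrow> real"
  defines "\<alpha> \<equiv> real k + 1/2"
  shows "exceptional_gegenbauer_operator \<alpha> (tau k ms (map t ms))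
    \<and> (\<forall>s::real. \<forall>i::nat.
         is_eigenfunction \<alpha> (tau k ms (map t ms)) (xgegenbauer k ms (map t ms) s i)
           (- real i * (2*\<alpha> + real i)))"
proof -
  define ps where "ps = map t ms"
  have len: "length ps = length ms"
    unfolding ps_def by simp
  have eigen: "is_eigenfunction \<alpha> (tau k ms ps) (xgegenbauer k ms ps s i) (gegenbauer_eigenvalue \<alpha> i)" for s i
    unfolding \<alpha>_def by (rule is_eigenfunctionI gop_numerator_xgegenbauer[OF len])+
  define E where "E = Suc (degree (tau k ms ps))"
  have "exceptional_gegenbauer_operator \<alpha> (tau k ms ps)"
  proof (rule exceptional_gegenbauer_operatorI)
    show "xgegenbauer k ms ps 0 (i + E) \<noteq> 0" for i
      using poly_xgegenbauer_minus_one_nonzero[OF len] by (metis poly_0)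
    show "degree (xgegenbauer k ms ps 0 (i + E)) = i + (E + degree (tau k ms ps))" for i
      using degree_xgegenbauer[OF len, of k "i + E"] by (simp add: E_def)
  qed (use eigen tau_nonzero in auto)
  then show ?thesis
    using eigen unfolding ps_def by blast
qed

end
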